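(* Let $f=h+\overline{g}$ be a sense-preserving locally univalent harmonic mapping in $\mathbb{D}$ with $f\in\mathcal{BT}$ and dilatation $w$ satisfying $\|w\|<1$. Then for all $z_1,z_2\in\mathbb{D}$, $$|f(z_1)-f(z_2)|\le\left(\frac{1+\|w\|}{1-\|w\|}\right)^{1/2}\beta_2(f)\,d_h(z_1,z_2).$$
   Context: $\mathbb{D}$ is the unit disk. A sense-preserving locally univalent harmonic mapping $f:\mathbb{D}\to\mathbb{C}$ is written $f=h+\overline{g}$ with $h,g$ analytic in $\mathbb{D}$, $h'\neq 0$ in $\mathbb{D}$; its dilatation is $w=g'/h'$, analytic with $|w|<1$ in $\mathbb{D}$, and $\|w\|=\sup_{z\in\mathbb{D}}|w(z)|$. For a smooth $F:\mathbb{D}\to\mathbb{C}$, $J_F=|F_z|^2-|F_{\bar z}|^2$ with $\partial_z=\frac12(\partial_x-i\partial_y)$, $\partial_{\bar z}=\frac12(\partial_x+i\partial_y)$ (so $J_f=|h'|^2-|g'|^2$). The Bloch-type class $\mathcal{BT}$ consists of smooth $F:\mathbb{D}\to\mathbb{C}$ with $\beta_2(F):=\sup_{z\in\mathbb{D}}(1-|z|^2)\sqrt{|J_F(z)|}<\infty$. The hyperbolic distance is $d_h(z,\xi)=\frac12\log\frac{1+p(z,\xi)}{1-p(z,\xi)}$ with $p(z,\xi)=\left|\frac{z-\xi}{1-\overline{\xi}z}\right|$. *)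

theory Defs
  imports "HOL-Analysis.Analysis"
begin

definition wirt_z :: "(complex \<Rightarrow> complex) \<Rightarrow> complex \<Rightarrow> complex" where
  "wirt_z F z = (frechet_derivative F (at z) 1 - \<i> * frechet_derivative F (at z) \<i>) / 2"

definition wirt_zbar :: "(complex \<Rightarrow> complex) \<Rightarrow> complex \<Rightarrow> complex" where
  "wirt_zbar F z = (frechet_derivative F (at z) 1 + \<i> * frechet_derivative F (at z) \<i>) / 2"

definition jac :: "(complex \<Rightarrow> complex) \<Rightarrow> complex \<Rightarrow> real" where
  "jac F z = (cmod (wirt_z F z))\<^sup>2 - (cmod (wirt_zbar F z))\<^sup>2"

definition beta2 :: "(complex \<Rightarrow> complex) \<Rightarrow> real" where
  "beta2 F = (SUP z\<in>ball 0 1. (1 - (cmod z)\<^sup>2) * sqrt \<bar>jac F z\<bar>)"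

definition in_BT :: "(complex \<Rightarrow> complex) \<Rightarrow> bool" where
  "in_BT F \<longleftrightarrow> (\<forall>z\<in>ball 0 1. F differentiable (at z))
     \<and> bdd_above ((\<lambda>z. (1 - (cmod z)\<^sup>2) * sqrt \<bar>jac F z\<bar>) ` ball 0 1)"

definition pseudo_hyp :: "complex \<Rightarrow> complex \<Rightarrow> real" where
  "pseudo_hyp z \<xi> = cmod ((z - \<xi>) / (1 - cnj \<xi> * z))"

definition d_h :: "complex \<Rightarrow> complex \<Rightarrow> real" where
  "d_h z \<xi> = (1/2) * ln ((1 + pseudo_hyp z \<xi>) / (1 - pseudo_hyp z \<xi>))"

end

theory Submission imports Defs begin

text \<open>
  Since \<open>J\<^sub>f = |h'|\<^sup>2 (1 - |w|\<^sup>2)\<close> and \<open>|w| \<le> \<parallel>w\<parallel>\<close>, the Bloch-type bound gives pointwise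
  \<open>(1 - |z|\<^sup>2)(|h'(z)| + |g'(z)|) \<le> ((1 + \<parallel>w\<parallel>)/(1 - \<parallel>w\<parallel>))\<^sup>1\<^sup>/\<^sup>2 \<beta>\<^sub>2(f)\<close>, i.e. the
  differential of \<open>f\<close> is bounded with respect to the hyperbolic metric \<open>|dz|/(1 - |z|\<^sup>2)\<close>.
  The bound on \<open>|f(z\<^sub>1) - f(z\<^sub>2)|\<close> follows by the mean value inequality along the
  hyperbolic geodesic from \<open>z\<^sub>2\<close> to \<open>z\<^sub>1\<close>, parametrised by hyperbolic arc length, whose
  length is \<open>d\<^sub>h(z\<^sub>1, z\<^sub>2)\<close>.
\<close>

lemma norm_one_minus_cnj_mult_sq_diff:
  fixes a b :: complex
  shows "(cmod (1 - cnj a * b))\<^sup>2 - (cmod (b - a))\<^sup>2 = (1 - (cmod a)\<^sup>2) * (1 - (cmod b)\<^sup>2)"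
  unfolding cmod_power2 by (simp add: algebra_simps power2_eq_square)

lemma tanh_artanh_real:
  assumes "\<bar>p::real\<bar> < 1"
  shows "tanh (artanh p) = p"
proof -
  have e: "exp (- 2 * artanh p) = (1 - p) / (1 + p)"
    using assms by (simp add: artanh_def exp_minus exp_ln_iff divide_pos_pos)
  have "tanh (artanh p) = (1 - (1 - p) / (1 + p)) / (1 + (1 - p) / (1 + p))"
    by (simp only: tanh_real_altdef e)
  also have "\<dots> = p" using assms by (simp add: field_simps)
  finally show ?thesis .
qed

definition disk_shift :: "complex \<Rightarrow> complex \<Rightarrow> complex" where
  "disk_shift a t = (a + t) / (1 + cnj a * t)"

lemma disk_shift_denom_nonzero:
  assumes "cmod a < 1" "cmod t < 1"
  shows "1 + cnj a * t \<noteq> 0"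
proof
  assume "1 + cnj a * t = 0"
  hence "cmod (cnj a * t) = 1" by (metis add_eq_0_iff norm_minus_cancel norm_one)
  moreover have "cmod a * cmod t \<le> cmod a"
    using assms(2) by (simp add: mult_left_le)
  ultimately show False
    using assms(1) by (simp add: norm_mult)
qed

lemma one_minus_norm_disk_shift_sq:
  assumes "1 + cnj a * t \<noteq> 0"
  shows "1 - (cmod (disk_shift a t))\<^sup>2
           = (1 - (cmod a)\<^sup>2) * (1 - (cmod t)\<^sup>2) / (cmod (1 + cnj a * t))\<^sup>2"
proof -
  have "(cmod (1 + cnj a * t))\<^sup>2 - (cmod (a + t))\<^sup>2 = (1 - (cmod a)\<^sup>2) * (1 - (cmod t)\<^sup>2)"
    using norm_one_minus_cnj_mult_sq_diff[of "- a" t] by (simp add: add.commute)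
  then show ?thesis
    using assms by (simp add: disk_shift_def norm_divide power_divide field_simps)
qed

lemma disk_shift_in_ball:
  assumes "cmod a < 1" "cmod t < 1"
  shows "disk_shift a t \<in> ball 0 1"
proof -
  have "0 < (1 - (cmod a)\<^sup>2) * (1 - (cmod t)\<^sup>2) / (cmod (1 + cnj a * t))\<^sup>2"
    using assms disk_shift_denom_nonzero[OF assms]
    by (intro divide_pos_pos mult_pos_pos) (simp_all add: abs_square_less_1)
  then have "(cmod (disk_shift a t))\<^sup>2 < 1"
    using one_minus_norm_disk_shift_sq[OF disk_shift_denom_nonzero[OF assms]] by simp
  then show ?thesis by (simp add: abs_square_less_1)
qed

lemma disk_shift_has_field_derivative:
  assumes "1 + cnj a * t \<noteq> 0"
  shows "(disk_shift a has_field_derivative (1 - cnj a * a) / (1 + cnj a * t)\<^sup>2) (at t)"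
  unfolding disk_shift_def [abs_def] using assms
  by (auto intro!: derivative_eq_intros simp: field_simps power2_eq_square)

text \<open>Equality case of the Schwarz--Pick lemma.\<close>
lemma norm_deriv_disk_shift:
  assumes "cmod a < 1" "1 + cnj a * t \<noteq> 0"
  shows "cmod ((1 - cnj a * a) / (1 + cnj a * t)\<^sup>2) * (1 - (cmod t)\<^sup>2) = 1 - (cmod (disk_shift a t))\<^sup>2"
proof -
  have "1 - cnj a * a = of_real (1 - (cmod a)\<^sup>2)"
    by (metis complex_norm_square mult.commute of_real_1 of_real_diff of_real_power)
  then have "cmod (1 - cnj a * a) = \<bar>1 - (cmod a)\<^sup>2\<bar>" by (simp only: norm_of_real)
  also have "\<dots> = 1 - (cmod a)\<^sup>2"
    using assms(1) by (simp add: abs_square_le_1 less_imp_le)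
  finally have "cmod (1 - cnj a * a) = 1 - (cmod a)\<^sup>2" .
  then show ?thesis
    using one_minus_norm_disk_shift_sq[OF assms(2)] by (simp add: norm_divide norm_power)
qed

lemma disk_shift_inverse:
  assumes "cmod a < 1" "1 - cnj a * z \<noteq> 0"
  shows "disk_shift a ((z - a) / (1 - cnj a * z)) = z"
proof -
  have "1 - cnj a * a \<noteq> 0"
    using disk_shift_denom_nonzero[of a "- a"] assms(1) by simp
  moreover have "a + (z - a) / (1 - cnj a * z) = z * (1 - cnj a * a) / (1 - cnj a * z)"
    using assms(2) by (simp add: field_simps)
  moreover have "1 + cnj a * ((z - a) / (1 - cnj a * z)) = (1 - cnj a * a) / (1 - cnj a * z)"
    using assms(2) by (simp add: field_simps)
  ultimately show ?thesis
    using assms(2) by (simp add: disk_shift_def)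
qed

lemma pseudo_hyp_less_1:
  assumes "z \<in> ball 0 1" "\<xi> \<in> ball 0 1"
  shows "pseudo_hyp z \<xi> < 1"
proof -
  have "0 < (1 - (cmod \<xi>)\<^sup>2) * (1 - (cmod z)\<^sup>2)"
    using assms by (intro mult_pos_pos) (simp_all add: abs_square_less_1)
  then have "(cmod (z - \<xi>))\<^sup>2 < (cmod (1 - cnj \<xi> * z))\<^sup>2"
    using norm_one_minus_cnj_mult_sq_diff[of \<xi> z] by simp
  then have "cmod (z - \<xi>) < cmod (1 - cnj \<xi> * z)"
    by (simp add: power_less_imp_less_base)
  then show ?thesis
    by (simp add: pseudo_hyp_def norm_divide divide_less_eq)
qed

lemma d_h_nonneg:
  assumes "z \<in> ball 0 1" "\<xi> \<in> ball 0 1"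
  shows "0 \<le> d_h z \<xi>"
  using pseudo_hyp_less_1[OF assms] unfolding d_h_def
  by (simp add: pseudo_hyp_def ln_ge_zero_iff le_divide_eq)

lemma tanh_ray_has_vector_derivative:
  fixes e :: complex
  shows "((\<lambda>u. of_real (tanh u) * e) has_vector_derivative of_real (1 - tanh u ^ 2) * e) (at u)"
proof -
  have "(tanh has_real_derivative 1 - tanh u ^ 2) (at u)"
    by (auto intro!: derivative_eq_intros)
  from has_vector_derivative_mult_left[OF has_vector_derivative_of_real[OF this], of e]
  show ?thesis by simp
qed

lemma
  fixes e :: complex
  assumes "cmod e \<le> 1"
  shows tanh_ray_norm_less: "cmod (of_real (tanh u) * e) < 1"
    and tanh_ray_speed:
      "cmod (of_real (1 - tanh u ^ 2) * e) \<le> 1 - (cmod (of_real (tanh u) * e))\<^sup>2"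
proof -
  have tanh1: "\<bar>tanh u\<bar> < 1"
    using tanh_real_bounds[of u] by auto
  have norm_ray: "cmod (of_real (tanh u) * e) = \<bar>tanh u\<bar> * cmod e"
    by (simp add: norm_mult)
  show "cmod (of_real (tanh u) * e) < 1"
    using mult_left_le[OF assms abs_ge_zero, of "tanh u"] tanh1 by (simp add: norm_ray)
  have "0 \<le> 1 - (tanh u)\<^sup>2" using tanh1 by (simp add: abs_square_le_1 less_imp_le)
  then have norm_deriv_ray: "cmod (of_real (1 - tanh u ^ 2) * e) = (1 - (tanh u)\<^sup>2) * cmod e"
    by (simp only: norm_mult norm_of_real abs_of_nonneg)
  have "0 \<le> (1 - cmod e) * (1 + (tanh u)\<^sup>2 * cmod e)" using assms by simp
  then show "cmod (of_real (1 - tanh u ^ 2) * e) \<le> 1 - (cmod (of_real (tanh u) * e))\<^sup>2"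
    unfolding norm_deriv_ray norm_ray by (simp add: power_mult_distrib algebra_simps power2_eq_square)
qed

lemma hyperbolic_geodesic:
  assumes z1: "z1 \<in> ball 0 1" and z2: "z2 \<in> ball 0 1"
  obtains \<Gamma> \<Gamma>' where "\<Gamma> 0 = z2" "\<Gamma> (d_h z1 z2) = z1"
    "\<And>u. \<Gamma> u \<in> ball 0 1"
    "\<And>u. (\<Gamma> has_vector_derivative \<Gamma>' u) (at u)"
    "\<And>u. cmod (\<Gamma>' u) \<le> 1 - (cmod (\<Gamma> u))\<^sup>2"
proof -
  define a where "a = (z1 - z2) / (1 - cnj z2 * z1)"
  define e where "e = sgn a"
  \<comment> \<open>The radius through \<open>a\<close> at hyperbolic unit speed, moved by \<open>disk_shift z2\<close> so that it
    passes through \<open>z2\<close> (at \<open>u = 0\<close>) and \<open>z1\<close> (at \<open>u = artanh |a|\<close>).\<close>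
  define T where "T u = of_real (tanh u) * e" for u :: real
  define T' where "T' u = of_real (1 - tanh u ^ 2) * e" for u :: real
  define \<phi>' where "\<phi>' t = (1 - cnj z2 * z2) / (1 + cnj z2 * t)\<^sup>2" for t
  have z2': "cmod z2 < 1" using z2 by simp
  have e1: "cmod e \<le> 1" by (simp add: e_def norm_sgn)
  have T_in: "cmod (T u) < 1" for u
    unfolding T_def by (rule tanh_ray_norm_less[OF e1])
  have den: "1 + cnj z2 * T u \<noteq> 0" for u
    using disk_shift_denom_nonzero[OF z2' T_in] .
  have T_deriv: "(T has_vector_derivative T' u) (at u)" for u
    unfolding T_def [abs_def] T'_def by (rule tanh_ray_has_vector_derivative)
  have T_speed: "cmod (T' u) \<le> 1 - (cmod (T u))\<^sup>2" for u
    unfolding T_def T'_def by (rule tanh_ray_speed[OF e1])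
  have dh: "d_h z1 z2 = artanh (cmod a)"
    by (simp add: d_h_def artanh_def pseudo_hyp_def a_def)
  have "tanh (d_h z1 z2) = cmod a"
    using pseudo_hyp_less_1[OF z1 z2] by (simp add: dh tanh_artanh_real pseudo_hyp_def a_def)
  then have T_end: "T (d_h z1 z2) = a"
    by (cases "a = 0") (simp_all add: T_def e_def sgn_div_norm scaleR_conv_of_real)
  show ?thesis
  proof
    show "disk_shift z2 (T 0) = z2" by (simp add: T_def disk_shift_def)
    show "disk_shift z2 (T (d_h z1 z2)) = z1"
      using disk_shift_inverse[OF z2'] disk_shift_denom_nonzero[of z2 "- z1"] z1 z2'
      by (simp add: T_end a_def)
    show "disk_shift z2 (T u) \<in> ball 0 1" for u
      by (rule disk_shift_in_ball[OF z2' T_in])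
    show "((\<lambda>u. disk_shift z2 (T u)) has_vector_derivative T' u * \<phi>' (T u)) (at u)" for u
      using field_vector_diff_chain_at[OF T_deriv disk_shift_has_field_derivative[OF den]]
      by (simp add: o_def \<phi>'_def)
    show "cmod (T' u * \<phi>' (T u)) \<le> 1 - (cmod (disk_shift z2 (T u)))\<^sup>2" for u
    proof -
      have "cmod (T' u * \<phi>' (T u)) \<le> (1 - (cmod (T u))\<^sup>2) * cmod (\<phi>' (T u))"
        unfolding norm_mult by (rule mult_right_mono[OF T_speed norm_ge_zero])
      also have "\<dots> = 1 - (cmod (disk_shift z2 (T u)))\<^sup>2"
        unfolding \<phi>'_def by (subst mult.commute) (rule norm_deriv_disk_shift[OF z2' den])
      finally show ?thesis .
    qed
  qed
qed

lemma hyperbolic_lipschitz: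
  fixes F :: "complex \<Rightarrow> 'a::real_normed_vector"
  assumes deriv: "\<And>z. z \<in> ball 0 1 \<Longrightarrow> (F has_derivative F' z) (at z)"
    and bound: "\<And>z. z \<in> ball 0 1 \<Longrightarrow> (1 - (cmod z)\<^sup>2) * onorm (F' z) \<le> K"
    and z1: "z1 \<in> ball 0 1" and z2: "z2 \<in> ball 0 1"
  shows "norm (F z1 - F z2) \<le> K * d_h z1 z2"
proof -
  obtain \<Gamma> \<Gamma>' where ends: "\<Gamma> 0 = z2" "\<Gamma> (d_h z1 z2) = z1"
    and in_ball: "\<And>u. \<Gamma> u \<in> ball 0 1"
    and \<Gamma>_deriv: "\<And>u. (\<Gamma> has_vector_derivative \<Gamma>' u) (at u)"
    and speed: "\<And>u. cmod (\<Gamma>' u) \<le> 1 - (cmod (\<Gamma> u))\<^sup>2"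
    using hyperbolic_geodesic[OF z1 z2] by blast
  have comp_deriv: "((\<lambda>u. F (\<Gamma> u)) has_derivative (\<lambda>v. F' (\<Gamma> u) (v *\<^sub>R \<Gamma>' u))) (at u)" for u
    using diff_chain_at[OF \<Gamma>_deriv[of u, unfolded has_vector_derivative_def] deriv[OF in_ball]]
    by (simp add: o_def)
  have comp_bound: "onorm (\<lambda>v. F' (\<Gamma> u) (v *\<^sub>R \<Gamma>' u)) \<le> K" for u
  proof (rule onorm_le)
    fix v :: real
    have lin: "bounded_linear (F' (\<Gamma> u))"
      using deriv[OF in_ball] by (rule has_derivative_bounded_linear)
    have "norm (F' (\<Gamma> u) (v *\<^sub>R \<Gamma>' u)) \<le> onorm (F' (\<Gamma> u)) * (\<bar>v\<bar> * cmod (\<Gamma>' u))"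
      using onorm[OF lin, of "v *\<^sub>R \<Gamma>' u"] by simp
    also have "\<dots> \<le> onorm (F' (\<Gamma> u)) * (\<bar>v\<bar> * (1 - (cmod (\<Gamma> u))\<^sup>2))"
      using speed[of u] onorm_pos_le[OF lin] by (intro mult_left_mono) auto
    also have "\<dots> \<le> K * norm v"
      using mult_left_mono[OF bound[OF in_ball, of u], of "\<bar>v\<bar>"] by (simp add: algebra_simps)
    finally show "norm (F' (\<Gamma> u) (v *\<^sub>R \<Gamma>' u)) \<le> K * norm v" .
  qed
  have "norm (F (\<Gamma> (d_h z1 z2)) - F (\<Gamma> 0)) \<le> K * norm (d_h z1 z2 - 0)"
    by (rule differentiable_bound[where S=UNIV and f'="\<lambda>u v. F' (\<Gamma> u) (v *\<^sub>R \<Gamma>' u)"])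
      (use comp_deriv comp_bound in auto)
  then show ?thesis
    using d_h_nonneg[OF z1 z2] by (simp add: ends)
qed

lemma harmonic_has_derivative:
  assumes "(h has_field_derivative h') (at z)" "(g has_field_derivative g') (at z)"
  shows "((\<lambda>z. h z + cnj (g z)) has_derivative (\<lambda>v. h' * v + cnj (g' * v))) (at z)"
proof -
  have "((\<lambda>z. cnj (g z)) has_derivative (\<lambda>v. cnj (g' * v))) (at z)"
    by (rule has_derivative_cnj) (use assms(2) in \<open>simp add: has_field_derivative_def\<close>)
  then show ?thesis
    using assms(1) by (auto intro!: has_derivative_add simp: has_field_derivative_def)
qed

lemma jac_harmonic:
  assumes "(h has_field_derivative h') (at z)" "(g has_field_derivative g') (at z)"
  shows "jac (\<lambda>z. h z + cnj (g z)) z = (cmod h')\<^sup>2 - (cmod g')\<^sup>2"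
proof -
  have fd: "frechet_derivative (\<lambda>z. h z + cnj (g z)) (at z) = (\<lambda>v. h' * v + cnj (g' * v))"
    using frechet_derivative_at[OF harmonic_has_derivative[OF assms]] by simp
  have "wirt_z (\<lambda>z. h z + cnj (g z)) z = h'" "wirt_zbar (\<lambda>z. h z + cnj (g z)) z = cnj g'"
    unfolding wirt_z_def wirt_zbar_def fd by (simp_all add: complex_eq_iff)
  then show ?thesis by (simp add: jac_def)
qed

lemma onorm_harmonic_derivative_le:
  "onorm (\<lambda>v. h' * v + cnj (g' * v)) \<le> cmod h' + cmod g'"
proof (rule onorm_le)
  fix v
  show "cmod (h' * v + cnj (g' * v)) \<le> (cmod h' + cmod g') * cmod v"
    using norm_triangle_ineq[of "h' * v" "cnj (g' * v)"] by (simp add: norm_mult distrib_right)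
qed

lemma norm_add_norm_le_sqrt_jacobian:
  fixes h' g' :: complex
  assumes "h' \<noteq> 0" "cmod (g' / h') \<le> W" "W < 1"
  shows "cmod h' + cmod g' \<le> sqrt ((1 + W) / (1 - W)) * sqrt ((cmod h')\<^sup>2 - (cmod g')\<^sup>2)"
proof -
  define H where "H = cmod h'"
  define r where "r = cmod (g' / h')"
  have H: "0 < H" using assms(1) by (simp add: H_def)
  have g_eq: "cmod g' = r * H" using H by (simp add: r_def H_def norm_divide)
  have r: "0 \<le> r" "r \<le> W" using assms(2) by (auto simp: r_def)
  have "(1 + W) * (1 - r\<^sup>2) - (1 + r)\<^sup>2 * (1 - W) = 2 * (1 + r) * (W - r)"
    by (simp add: algebra_simps power2_eq_square)
  moreover have "0 \<le> 2 * (1 + r) * (W - r)" using r by simp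
  ultimately have "(1 + r)\<^sup>2 \<le> (1 + W) / (1 - W) * (1 - r\<^sup>2)"
    using assms(3) by (simp add: field_simps)
  then have root: "1 + r \<le> sqrt ((1 + W) / (1 - W) * (1 - r\<^sup>2))"
    by (rule real_le_rsqrt)
  have sqrt_jac: "sqrt (H\<^sup>2 - (r * H)\<^sup>2) = H * sqrt (1 - r\<^sup>2)"
  proof -
    have "H\<^sup>2 - (r * H)\<^sup>2 = H\<^sup>2 * (1 - r\<^sup>2)"
      by (simp add: algebra_simps power_mult_distrib)
    then show ?thesis using H by (simp add: real_sqrt_mult)
  qed
  have "cmod h' + cmod g' = H * (1 + r)"
    by (simp add: H_def g_eq algebra_simps)
  also have "\<dots> \<le> H * sqrt ((1 + W) / (1 - W) * (1 - r\<^sup>2))"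
    using H root by simp
  also have "\<dots> = sqrt ((1 + W) / (1 - W)) * sqrt ((cmod h')\<^sup>2 - (cmod g')\<^sup>2)"
    by (simp only: real_sqrt_mult sqrt_jac g_eq H_def[symmetric] mult.left_commute)
  finally show ?thesis .
qed

lemma onorm_harmonic_derivative_le_sqrt_jac:
  assumes "(h has_field_derivative h') (at z)" "(g has_field_derivative g') (at z)"
    and "h' \<noteq> 0" "cmod (g' / h') \<le> W" "W < 1"
  shows "onorm (\<lambda>v. h' * v + cnj (g' * v))
           \<le> sqrt ((1 + W) / (1 - W)) * sqrt \<bar>jac (\<lambda>z. h z + cnj (g z)) z\<bar>"
proof -
  have "0 \<le> W" using assms(4) norm_ge_zero order_trans by blast
  then have sqrt_ratio_nonneg: "0 \<le> sqrt ((1 + W) / (1 - W))"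
    using assms(5) by simp
  have "onorm (\<lambda>v. h' * v + cnj (g' * v)) \<le> cmod h' + cmod g'"
    by (rule onorm_harmonic_derivative_le)
  also have "\<dots> \<le> sqrt ((1 + W) / (1 - W)) * sqrt (jac (\<lambda>z. h z + cnj (g z)) z)"
    unfolding jac_harmonic[OF assms(1,2)] by (rule norm_add_norm_le_sqrt_jacobian[OF assms(3-5)])
  also have "\<dots> \<le> sqrt ((1 + W) / (1 - W)) * sqrt \<bar>jac (\<lambda>z. h z + cnj (g z)) z\<bar>"
    using sqrt_ratio_nonneg by (intro mult_left_mono real_sqrt_le_mono) auto
  finally show ?thesis .
qed

theorem mainTheorem10:
  fixes h g :: "complex \<Rightarrow> complex" and z1 z2 :: complex
  assumes hol_h: "h holomorphic_on ball 0 1"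
    and hol_g: "g holomorphic_on ball 0 1"
    and loc_univ: "\<forall>z\<in>ball 0 1. deriv h z \<noteq> 0"
    and sense_pres: "\<forall>z\<in>ball 0 1. cmod (deriv g z / deriv h z) < 1"
    and BT: "in_BT (\<lambda>z. h z + cnj (g z))"
    and norm_w: "(SUP z\<in>ball 0 1. cmod (deriv g z / deriv h z)) < 1"
    and z1: "z1 \<in> ball 0 1" and z2: "z2 \<in> ball 0 1"
  shows "cmod ((h z1 + cnj (g z1)) - (h z2 + cnj (g z2)))
     \<le> sqrt ((1 + (SUP z\<in>ball 0 1. cmod (deriv g z / deriv h z)))
              / (1 - (SUP z\<in>ball 0 1. cmod (deriv g z / deriv h z))))
        * beta2 (\<lambda>z. h z + cnj (g z)) * d_h z1 z2"
proof -
  define W where "W = (SUP z\<in>ball 0 1. cmod (deriv g z / deriv h z))"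
  define F where "F = (\<lambda>z. h z + cnj (g z))"
  define C where "C = sqrt ((1 + W) / (1 - W))"
  have hd: "(h has_field_derivative deriv h z) (at z)" if "z \<in> ball 0 1" for z
    using holomorphic_derivI[OF hol_h open_ball that] .
  have gd: "(g has_field_derivative deriv g z) (at z)" if "z \<in> ball 0 1" for z
    using holomorphic_derivI[OF hol_g open_ball that] .
  have w_le: "cmod (deriv g z / deriv h z) \<le> W" if "z \<in> ball 0 1" for z
    unfolding W_def
    by (rule cSUP_upper) (use sense_pres that in \<open>auto intro!: bdd_aboveI2[where M=1] less_imp_le\<close>)
  have beta_le: "(1 - (cmod z)\<^sup>2) * sqrt \<bar>jac F z\<bar> \<le> beta2 F" if "z \<in> ball 0 1" for z
    unfolding beta2_def by (rule cSUP_upper) (use BT that in \<open>simp_all add: in_BT_def F_def\<close>)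
  have bound: "(1 - (cmod z)\<^sup>2) * onorm (\<lambda>v. deriv h z * v + cnj (deriv g z * v)) \<le> C * beta2 F"
    if z: "z \<in> ball 0 1" for z
  proof -
    have "0 \<le> W" using w_le[OF z] norm_ge_zero order_trans by blast
    then have C0: "0 \<le> C" using norm_w by (simp add: C_def W_def)
    have "0 \<le> 1 - (cmod z)\<^sup>2" using z by (simp add: abs_square_le_1 less_imp_le)
    then have "(1 - (cmod z)\<^sup>2) * onorm (\<lambda>v. deriv h z * v + cnj (deriv g z * v))
        \<le> C * ((1 - (cmod z)\<^sup>2) * sqrt \<bar>jac F z\<bar>)"
      using onorm_harmonic_derivative_le_sqrt_jac[OF hd[OF z] gd[OF z] _ w_le[OF z]] loc_univ z norm_w
      by (simp add: mult_left_mono mult.left_commute C_def F_def W_def)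
    also have "\<dots> \<le> C * beta2 F"
      using C0 by (intro mult_left_mono beta_le[OF z])
    finally show ?thesis .
  qed
  have "cmod (F z1 - F z2) \<le> C * beta2 F * d_h z1 z2"
    by (rule hyperbolic_lipschitz[OF _ bound z1 z2])
      (unfold F_def, rule harmonic_has_derivative[OF hd gd])
  then show ?thesis by (simp add: F_def W_def C_def)
qed

end
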